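(* Consider the binary-type case $N=2$ with a Low type and a High type, with parameters $p_L,p_H\in(0,1]$, $c_L,c_H>0$, $r_L,r_H\in(0,1]$, $r_L<r_H$. Write the four actions as $O=\emptyset$, $L=\{\text{Low}\}$, $H=\{\text{High}\}$, $B=\{\text{Low},\text{High}\}$, so $Q_O=0$, $Q_L=r_Lp_L$, $Q_H=r_Hp_H$, $Q_B=1-(1-Q_L)(1-Q_H)$, $E_O=0$, $E_L=p_Lc_L$, $E_H=p_Hc_H$, $E_B=E_L+E_H$, and $\gamma_{O,L}=E_L/Q_L$, $\gamma_{O,H}=E_H/Q_H$. Then there exists an optimal deterministic stationary threshold-type age-dependent policy $\phi^*$ of the MDP $\Lambda$, which has one of the following structures: (1) (LH structure) if $\frac{1-Q_H}{1-Q_L}<\frac{\gamma_{O,L}}{\gamma_{O,H}}<1$, then $\phi^*$ uses actions in the order $O,L,H,B$ with thresholds $1\le\theta_{O\to L}\le\theta_{L\to H}\le\theta_{H\to B}$ in $\mathbb{N}^+$ (i.e. $\phi^*(s)=O$ for $s<\theta_{O\to L}$, $L$ for $\theta_{O\to L}\le s<\theta_{L\to H}$, $H$ for $\theta_{L\to H}\le s<\theta_{H\to B}$, $B$ for $s\ge\theta_{H\to B}$); (2) (HL structure) if $1<\frac{\gamma_{O,L}}{\gamma_{O,H}}<\frac{1-Q_H}{1-Q_L}$, then $\phi^*$ uses actions in the order $O,H,L,B$ with thresholds $1\le\theta_{O\to H}\le\theta_{H\to L}\le\theta_{L\to B}$; (3) (None-L structure) if $\frac{\gamma_{O,L}}{\gamma_{O,H}}\ge\max\{1,\frac{1-Q_H}{1-Q_L}\}$,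 then $\phi^*$ uses actions in the order $O,H,B$ with thresholds $1\le\theta_{O\to H}\le\theta_{H\to B}$; (4) (None-H structure) if $\frac{\gamma_{O,L}}{\gamma_{O,H}}<\min\{1,\frac{1-Q_H}{1-Q_L}\}$, then $\phi^*$ uses actions in the order $O,L,B$ with thresholds $1\le\theta_{O\to L}\le\theta_{L\to B}$.
   Context: General model: vehicle types $\mathcal{N}$, each type $n$ with arrival probability $p_n$, mean operational cost $c_n$, mean sensing capability $r_n$; fixed $\beta\in(0,1)$, $\epsilon>0$. Actions $\mathcal{A}=2^{\mathcal{N}}$; success probability $Q_\emptyset=0$, $Q_a=1-\prod_{n\in a}(1-r_np_n)$; expected recruitment cost $E_a=\sum_{n\in a}p_nc_n$; marginal cost-effectiveness $\gamma_{a,a'}=(E_{a'}-E_a)/(Q_{a'}-Q_a)$. Immediate cost at state $\delta\in\mathbb{N}^+$: $u(\delta,a)=(1-\beta)E_a-\beta\epsilon\big(Q_a(\delta^2+2\delta)-(1+\delta)^2\big)$. MDP $\Lambda$: states $\mathbb{N}^+$; from state $s$ under action $a$ move to $1$ w.p. $Q_a$ and to $s+1$ w.p. $1-Q_a$; average cost $V(\phi)=\limsup_{T\to\infty}\frac1T\mathbb{E}^\phi[\sum_{t=1}^Tu(S(t),A(t))]$, $S(1)=1$, to be minimized over all policies. A threshold-type age-dependent policy is a deterministic stationary policy $\phi:\mathbb{N}^+\to\mathcal{A}$ that is piecewise constant in $s$, taking successive actions $b_1,\dots,b_K$ on consecutive intervals of states delimited by integer thresholds $\theta_{b_k\to b_{k+1}}$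 (the first state at which $b_{k+1}$ is used); equal consecutive thresholds mean the intermediate action is not used. *)

theory Defs
  imports "HOL-Probability.Probability"
begin

datatype vtype = Low | High

type_synonym action = "vtype set"

text \<open>Model parameters: p (arrival prob.), c (mean cost), r (mean sensing capability).\<close>

definition Qa :: "(vtype \<Rightarrow> real) \<Rightarrow> (vtype \<Rightarrow> real) \<Rightarrow> action \<Rightarrow> real" where
  "Qa p r a = 1 - (\<Prod>n\<in>a. 1 - r n * p n)"

definition Ea :: "(vtype \<Rightarrow> real) \<Rightarrow> (vtype \<Rightarrow> real) \<Rightarrow> action \<Rightarrow> real" where
  "Ea p c a = (\<Sum>n\<in>a. p n * c n)"

definition gamma :: "(vtype \<Rightarrow> real) \<Rightarrow> (vtype \<Rightarrow> real) \<Rightarrow> (vtype \<Rightarrow> real) \<Rightarrow> action \<Rightarrow> action \<Rightarrow> real" where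
  "gamma p c r a a' = (Ea p c a' - Ea p c a) / (Qa p r a' - Qa p r a)"

definition ucost :: "(vtype \<Rightarrow> real) \<Rightarrow> (vtype \<Rightarrow> real) \<Rightarrow> (vtype \<Rightarrow> real) \<Rightarrow> real \<Rightarrow> real
    \<Rightarrow> nat \<Rightarrow> action \<Rightarrow> real" where
  "ucost p c r \<beta> \<epsilon> \<delta> a =
     (1 - \<beta>) * Ea p c a
     - \<beta> * \<epsilon> * (Qa p r a * (real \<delta> ^ 2 + 2 * real \<delta>) - (1 + real \<delta>) ^ 2)"

definition trans :: "(vtype \<Rightarrow> real) \<Rightarrow> (vtype \<Rightarrow> real) \<Rightarrow> nat \<Rightarrow> action \<Rightarrow> nat pmf" where
  "trans p r s a = map_pmf (\<lambda>b. if b then 1 else s + 1) (bernoulli_pmf (Qa p r a))"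

type_synonym policy = "(nat \<times> action) list \<Rightarrow> nat \<Rightarrow> action pmf"

fun hist :: "(vtype \<Rightarrow> real) \<Rightarrow> (vtype \<Rightarrow> real) \<Rightarrow> policy \<Rightarrow> nat
    \<Rightarrow> ((nat \<times> action) list \<times> nat) pmf" where
  "hist p r \<phi> 0 = return_pmf ([], 1)"
| "hist p r \<phi> (Suc t) =
     bind_pmf (hist p r \<phi> t) (\<lambda>(h, s).
       bind_pmf (\<phi> h s) (\<lambda>a.
         map_pmf (\<lambda>s'. (h @ [(s, a)], s')) (trans p r s a)))"

text \<open>Expected immediate cost at time t+1, i.e. E[u(S(t+1), A(t+1))].\<close>
definition stage_cost :: "(vtype \<Rightarrow> real) \<Rightarrow> (vtype \<Rightarrow> real) \<Rightarrow> (vtype \<Rightarrow> real) \<Rightarrow> real \<Rightarrow> real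
    \<Rightarrow> policy \<Rightarrow> nat \<Rightarrow> real" where
  "stage_cost p c r \<beta> \<epsilon> \<phi> t =
     measure_pmf.expectation
       (bind_pmf (hist p r \<phi> t) (\<lambda>(h, s). map_pmf (\<lambda>a. (s, a)) (\<phi> h s)))
       (\<lambda>(s, a). ucost p c r \<beta> \<epsilon> s a)"

definition avg_cost :: "(vtype \<Rightarrow> real) \<Rightarrow> (vtype \<Rightarrow> real) \<Rightarrow> (vtype \<Rightarrow> real) \<Rightarrow> real \<Rightarrow> real
    \<Rightarrow> policy \<Rightarrow> ereal" where
  "avg_cost p c r \<beta> \<epsilon> \<phi> =
     limsup (\<lambda>T. ereal ((\<Sum>t<T. stage_cost p c r \<beta> \<epsilon> \<phi> t) / real T))"

definition stationary :: "(nat \<Rightarrow> action) \<Rightarrow> policy" where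
  "stationary d = (\<lambda>h s. return_pmf (d s))"

definition optimal_ds :: "(vtype \<Rightarrow> real) \<Rightarrow> (vtype \<Rightarrow> real) \<Rightarrow> (vtype \<Rightarrow> real) \<Rightarrow> real \<Rightarrow> real
    \<Rightarrow> (nat \<Rightarrow> action) \<Rightarrow> bool" where
  "optimal_ds p c r \<beta> \<epsilon> d \<longleftrightarrow>
     (\<forall>\<psi>. avg_cost p c r \<beta> \<epsilon> (stationary d) \<le> avg_cost p c r \<beta> \<epsilon> \<psi>)"

definition threshold_type :: "(nat \<Rightarrow> action) \<Rightarrow> bool" where
  "threshold_type d \<longleftrightarrow>
     (\<exists>K (b :: nat \<Rightarrow> action) (\<theta> :: nat \<Rightarrow> nat).
        \<theta> 0 = 1 \<and> (\<forall>k<K. \<theta> k \<le> \<theta> (Suc k)) \<and>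
        (\<forall>k<K. \<forall>s. \<theta> k \<le> s \<and> s < \<theta> (Suc k) \<longrightarrow> d s = b k) \<and>
        (\<forall>s. \<theta> K \<le> s \<longrightarrow> d s = b K))"

abbreviation actO :: action where "actO \<equiv> {}"
abbreviation actL :: action where "actL \<equiv> {Low}"
abbreviation actH :: action where "actH \<equiv> {High}"
abbreviation actB :: action where "actB \<equiv> {Low, High}"

definition struct3 :: "action \<Rightarrow> action \<Rightarrow> (nat \<Rightarrow> action) \<Rightarrow> bool" where
  "struct3 x y d \<longleftrightarrow>
     (\<exists>\<theta>1 \<theta>2 \<theta>3 :: nat. 1 \<le> \<theta>1 \<and> \<theta>1 \<le> \<theta>2 \<and> \<theta>2 \<le> \<theta>3 \<and>
        (\<forall>s\<ge>1. d s = (if s < \<theta>1 then actO else if s < \<theta>2 then x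
                       else if s < \<theta>3 then y else actB)))"

definition struct2 :: "action \<Rightarrow> (nat \<Rightarrow> action) \<Rightarrow> bool" where
  "struct2 x d \<longleftrightarrow>
     (\<exists>\<theta>1 \<theta>2 :: nat. 1 \<le> \<theta>1 \<and> \<theta>1 \<le> \<theta>2 \<and>
        (\<forall>s\<ge>1. d s = (if s < \<theta>1 then actO else if s < \<theta>2 then x else actB)))"

end

(* The proof builds a solution (g, h) of the average-cost optimality equation
     h s = min_a (u s a - g + Q a * h 1 + (1 - Q a) * h (s + 1)),   h 1 = 0,
   with h nondecreasing and of quadratic growth. Beyond a finite age the most reliable action
   attains the minimum, so h comes from finitely many steps of backward value iteration
   started at the explicit quadratic value of that action, and g is fixed by the intermediate
   value theorem. Every policy has average cost at least g (h (S T) cannot grow linearly in T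
   without the age term of the cost making the average exceed g), and the greedy policy of
   the equation attains g.
   Up to a term independent of the action, the minimised expression at age s is
   (1 - beta) E a - Q a * w with w nondecreasing in s, so the greedy actions have
   nondecreasing Q a, which yields thresholds. The conditions on the ratio of the two
   gammas say that (Q L, E L) (resp. (Q H, E H)) lies on or above the lower convex hull of
   the other actions in the (Q, E)-plane; such an action is never a strict minimiser and,
   with suitable tie-breaking, never chosen. *)

theory Submission
  imports Defs
begin

lemma action_cases: "a = actO \<or> a = actL \<or> a = actH \<or> a = actB"
proof -
  have "x \<in> a \<longleftrightarrow> (x = Low \<and> Low \<in> a) \<or> (x = High \<and> High \<in> a)" for x
    by (cases x) auto
  then show ?thesis by (cases "Low \<in> a"; cases "High \<in> a") blast+
qed

lemma actions_distinct [simp]: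
  "actO \<noteq> actL" "actO \<noteq> actH" "actO \<noteq> actB" "actL \<noteq> actH" "actL \<noteq> actB" "actH \<noteq> actB"
  "actL \<noteq> actO" "actH \<noteq> actO" "actB \<noteq> actO" "actH \<noteq> actL" "actB \<noteq> actL" "actB \<noteq> actH"
  by (auto simp: set_eq_iff)

lemma UNIV_action: "(UNIV :: action set) = {actO, actL, actH, actB}"
proof (rule set_eqI)
  fix a :: action
  show "a \<in> UNIV \<longleftrightarrow> a \<in> {actO, actL, actH, actB}"
    using action_cases[of a] by (simp only: UNIV_I insert_iff empty_iff simp_thms)
qed

lemma finite_UNIV_action: "finite (UNIV :: action set)"
  unfolding UNIV_action by simp

lemma finite_range_action: "finite (range (f :: action \<Rightarrow> 'b))"
  using finite_imageI[OF finite_UNIV_action] .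

lemma Min_range_action_le: "Min (range f) \<le> f a"
  for f :: "action \<Rightarrow> 'b::linorder"
  by (rule Min_le[OF finite_range_action]) simp

lemma Min_range_action_attained: "\<exists>a. Min (range f) = f a"
  for f :: "action \<Rightarrow> 'b::linorder"
proof -
  have "Min (range f) \<in> range f" by (rule Min_in[OF finite_range_action]) simp
  then show ?thesis by auto
qed

lemma Min_range_action: "Min (range f) = min (f actO) (min (f actL) (min (f actH) (f actB)))"
  for f :: "action \<Rightarrow> 'b::linorder"
  unfolding UNIV_action by simp

section \<open>Expectations along a policy\<close>

lemma finite_set_pmf_action: "finite (set_pmf (M :: action pmf))"
  using finite_subset[OF subset_UNIV finite_UNIV_action] .

lemma finite_set_pmf_trans: "finite (set_pmf (trans p r s a))"
  by (simp add: trans_def)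

lemma finite_set_pmf_hist: "finite (set_pmf (hist p r \<psi> t))"
  by (induction t) (auto simp: split_beta finite_set_pmf_action finite_set_pmf_trans)

lemma expectation_bind_pmf_finite:
  fixes f :: "'b \<Rightarrow> real"
  assumes "finite (set_pmf M)" "\<And>x. x \<in> set_pmf M \<Longrightarrow> finite (set_pmf (N x))"
  shows "measure_pmf.expectation (bind_pmf M N) f =
         measure_pmf.expectation M (\<lambda>x. measure_pmf.expectation (N x) f)"
  using assms by (simp add: pmf_expectation_bind[of "set_pmf M"] integral_measure_pmf[of "set_pmf M"])

text \<open>\<open>expected_sa p r \<psi> t \<phi>\<close> is the expectation of \<open>\<phi> (S (t + 1)) (A (t + 1))\<close>
  under \<open>\<psi>\<close>: \<open>hist p r \<psi> t\<close> is the law after \<open>t\<close> transitions.\<close>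

definition expected_sa :: "(vtype \<Rightarrow> real) \<Rightarrow> (vtype \<Rightarrow> real) \<Rightarrow> policy \<Rightarrow> nat
    \<Rightarrow> (nat \<Rightarrow> action \<Rightarrow> real) \<Rightarrow> real" where
  "expected_sa p r \<psi> t \<phi> = measure_pmf.expectation (hist p r \<psi> t)
     (\<lambda>x. measure_pmf.expectation (\<psi> (fst x) (snd x)) (\<phi> (snd x)))"

abbreviation expected_state :: "(vtype \<Rightarrow> real) \<Rightarrow> (vtype \<Rightarrow> real) \<Rightarrow> policy \<Rightarrow> nat
    \<Rightarrow> (nat \<Rightarrow> real) \<Rightarrow> real" where
  "expected_state p r \<psi> t f \<equiv> expected_sa p r \<psi> t (\<lambda>s a. f s)"

lemma stage_cost_eq_expected_sa: "stage_cost p c r \<beta> \<epsilon> \<psi> t = expected_sa p r \<psi> t (ucost p c r \<beta> \<epsilon>)"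
  unfolding stage_cost_def expected_sa_def
  by (subst expectation_bind_pmf_finite)
     (simp_all add: split_beta finite_set_pmf_hist finite_set_pmf_action)

lemma expected_state_0: "expected_state p r \<psi> 0 f = f 1"
  by (simp add: expected_sa_def)

lemma expected_state_Suc:
  assumes "\<And>a. 0 \<le> Qa p r a \<and> Qa p r a \<le> 1"
  shows "expected_state p r \<psi> (Suc t) f =
    expected_sa p r \<psi> t (\<lambda>s a. Qa p r a * f 1 + (1 - Qa p r a) * f (s + 1))"
  unfolding expected_sa_def hist.simps
  using assms
  by (simp add: expectation_bind_pmf_finite finite_set_pmf_hist finite_set_pmf_action
      finite_set_pmf_trans split_beta trans_def mult.commute)

lemma expected_sa_mono:
  assumes "\<And>s a. \<phi>1 s a \<le> \<phi>2 s a"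
  shows "expected_sa p r \<psi> t \<phi>1 \<le> expected_sa p r \<psi> t \<phi>2"
  unfolding expected_sa_def
  by (intro integral_mono)
     (simp_all add: integrable_measure_pmf_finite finite_set_pmf_hist finite_set_pmf_action assms)

lemma expected_sa_add:
  "expected_sa p r \<psi> t (\<lambda>s a. \<phi>1 s a + \<phi>2 s a) = expected_sa p r \<psi> t \<phi>1 + expected_sa p r \<psi> t \<phi>2"
  unfolding expected_sa_def
  by (simp add: integrable_measure_pmf_finite finite_set_pmf_hist finite_set_pmf_action)

lemma expected_sa_diff:
  "expected_sa p r \<psi> t (\<lambda>s a. \<phi>1 s a - \<phi>2 s a) = expected_sa p r \<psi> t \<phi>1 - expected_sa p r \<psi> t \<phi>2"
  unfolding expected_sa_def
  by (simp add: integrable_measure_pmf_finite finite_set_pmf_hist finite_set_pmf_action)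

lemma expected_sa_cmult: "expected_sa p r \<psi> t (\<lambda>s a. k * \<phi> s a) = k * expected_sa p r \<psi> t \<phi>"
  unfolding expected_sa_def by simp

lemma expected_sa_const: "expected_sa p r \<psi> t (\<lambda>s a. k) = k"
  unfolding expected_sa_def by simp

lemma expected_sa_stationary:
  "expected_sa p r (stationary d) t \<phi> = expected_state p r (stationary d) t (\<lambda>s. \<phi> s (d s))"
  unfolding expected_sa_def stationary_def by simp

lemma set_pmf_trans:
  assumes "0 \<le> Qa p r a" "Qa p r a \<le> 1" "s' \<in> set_pmf (trans p r s a)"
  shows "s' = 1 \<or> (s' = s + 1 \<and> Qa p r a < 1)"
  using assms by (auto simp: trans_def set_pmf_iff)

lemma set_pmf_hist_stationary:
  assumes Q: "\<And>a. 0 \<le> Qa p r a \<and> Qa p r a \<le> 1"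
    and Z: "1 \<in> Z" "\<And>s. s \<in> Z \<Longrightarrow> Qa p r (d s) < 1 \<Longrightarrow> s + 1 \<in> Z"
  shows "x \<in> set_pmf (hist p r (stationary d) t) \<Longrightarrow> snd x \<in> Z"
proof (induction t arbitrary: x)
  case (Suc t)
  then obtain h s s' where "(h, s) \<in> set_pmf (hist p r (stationary d) t)"
     "s' \<in> set_pmf (trans p r s (d s))" "x = (h @ [(s, d s)], s')"
    by (auto simp: stationary_def split_beta)
  with Suc.IH set_pmf_trans[of p r "d s"] Q Z show ?case by fastforce
qed (use Z in simp)

lemma expected_state_stationary_cong:
  assumes "\<And>a. 0 \<le> Qa p r a \<and> Qa p r a \<le> 1"
    and "1 \<in> Z" "\<And>s. s \<in> Z \<Longrightarrow> Qa p r (d s) < 1 \<Longrightarrow> s + 1 \<in> Z"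
    and "\<And>s. s \<in> Z \<Longrightarrow> f s = f' s"
  shows "expected_state p r (stationary d) t f = expected_state p r (stationary d) t f'"
  unfolding expected_sa_def
  using set_pmf_hist_stationary[OF assms(1-3)] assms(4)
  by (intro integral_cong_AE) (auto intro!: AE_pmfI)

lemma slope_mono_of_minimizers:
  fixes e1 e2 q1 q2 w1 w2 :: real
  assumes "e1 - q1 * w1 \<le> e2 - q2 * w1" "e2 - q2 * w2 \<le> e1 - q1 * w2" "w1 < w2"
  shows "q1 \<le> q2"
proof -
  have "(q1 - q2) * (w2 - w1) \<le> 0" using assms(1,2) by (simp add: algebra_simps)
  then show ?thesis using assms(3) by (simp add: mult_le_0_iff)
qed

text \<open>The point \<open>(q1, e1)\<close> lies on or above the lower convex hull of \<open>(0, 0)\<close>, \<open>(q2, e2)\<close> and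
  \<open>(1 - (1 - q1) * (1 - q2), e1 + e2)\<close>, so no linear objective \<open>k * e - q * w\<close> is strictly
  minimised there: it dominates a convex combination of two of the other points.\<close>

lemma not_strict_min_above_lower_hull:
  fixes k w q1 q2 e1 e2 :: real
  defines "f \<equiv> \<lambda>e q. k * e - q * w"
  assumes k: "0 \<le> k" and q: "0 < q1" "q1 \<le> 1" "0 < q2" "q2 \<le> 1" and e2: "0 < e2"
    and slope0: "q1 * e2 \<le> q2 * e1"
    and slopeB: "(1 - q2) * q1 * e2 \<le> (1 - q1) * q2 * e1"
  shows "\<not> (f e1 q1 < f 0 0 \<and> f e1 q1 < f e2 q2 \<and> f e1 q1 < f (e1 + e2) (1 - (1 - q1) * (1 - q2)))"
proof
  define qB where "qB = 1 - (1 - q1) * (1 - q2)"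
  assume "f e1 q1 < f 0 0 \<and> f e1 q1 < f e2 q2 \<and> f e1 q1 < f (e1 + e2) (1 - (1 - q1) * (1 - q2))"
  then have less: "f e1 q1 < f 0 0" "f e1 q1 < f e2 q2" "f e1 q1 < f (e1 + e2) qB"
    unfolding qB_def by auto
  show False
  proof (cases "q1 \<le> q2")
    case True
    have "q2 * f e1 q1 - (q1 * f e2 q2 + (q2 - q1) * f 0 0) = k * (q2 * e1 - q1 * e2)"
      unfolding f_def by (simp add: algebra_simps)
    moreover have "0 \<le> k * (q2 * e1 - q1 * e2)" using k slope0 by simp
    moreover have "q1 * f e1 q1 < q1 * f e2 q2" using less(2) q(1) by simp
    moreover have "(q2 - q1) * f e1 q1 \<le> (q2 - q1) * f 0 0"
      using less(1) True by (intro mult_left_mono) auto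
    ultimately show False by (simp add: algebra_simps)
  next
    case False
    have "q1 < 1"
    proof (rule ccontr)
      assume "\<not> q1 < 1"
      then have "q1 = 1" using q(2) by simp
      then have "(1 - q2) * e2 \<le> 0" using slopeB by simp
      then show False using False e2 \<open>q1 = 1\<close> by (simp add: mult_le_0_iff)
    qed
    have "(qB - q2) * f e1 q1 - ((qB - q1) * f e2 q2 + (q1 - q2) * f (e1 + e2) qB)
        = k * ((1 - q1) * q2 * e1 - (1 - q2) * q1 * e2)"
      unfolding f_def qB_def by (simp add: algebra_simps)
    moreover have "0 \<le> k * ((1 - q1) * q2 * e1 - (1 - q2) * q1 * e2)" using k slopeB by simp
    moreover have "(qB - q1) * f e1 q1 < (qB - q1) * f e2 q2"
    proof (rule mult_strict_left_mono[OF less(2)])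
      have "qB - q1 = q2 * (1 - q1)" unfolding qB_def by (simp add: algebra_simps)
      then show "0 < qB - q1" using \<open>q1 < 1\<close> q(3) by simp
    qed
    moreover have "(q1 - q2) * f e1 q1 < (q1 - q2) * f (e1 + e2) qB"
      using less(3) False by (intro mult_strict_left_mono) auto
    ultimately show False by (simp add: algebra_simps)
  qed
qed

fun first_min :: "('a \<Rightarrow> 'b::linorder) \<Rightarrow> 'a list \<Rightarrow> 'a" where
  "first_min f [a] = a"
| "first_min f (a # b # xs) = (let m = first_min f (b # xs) in if f a \<le> f m then a else m)"

lemma first_min_Cons:
  "ys \<noteq> [] \<Longrightarrow> first_min f (a # ys) = (let m = first_min f ys in if f a \<le> f m then a else m)"
  by (cases ys) auto

lemma first_min_le: "y \<in> set xs \<Longrightarrow> f (first_min f xs) \<le> f y"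
  by (induction f xs rule: first_min.induct) (auto simp: Let_def)

lemma first_min_last_less:
  assumes "first_min f (xs @ [z]) = z" "z \<notin> set xs" "y \<in> set xs"
  shows "f z < f y"
  using assms
proof (induction xs)
  case (Cons a xs)
  have "a \<noteq> z" using Cons.prems(2) by auto
  then have "first_min f (xs @ [z]) = z" "f z < f a"
    using Cons.prems(1) by (auto simp: first_min_Cons Let_def split: if_splits)
  then show ?case using Cons by auto
qed simp

text \<open>If the averages \<open>A T / T\<close> eventually stayed below \<open>y < g\<close>, the first bound would force
  \<open>X T\<close> to grow linearly, so that \<open>\<Sum>t<T. X (t + 1)\<close> grows quadratically, contradicting the second.\<close>

lemma superlinear_sum_not_eventually_linear:
  fixes A X :: "nat \<Rightarrow> real"
  assumes K: "0 < K" and b: "0 < b" and y: "y < g"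
    and A_ge_X: "\<And>T. real T * g + h1 - K * (X T + 1) \<le> A T"
    and A_ge_sum: "\<And>T. b * (\<Sum>t<T. X (t + 1)) \<le> A T"
    and X_nonneg: "\<And>t. 0 \<le> X t"
    and A_less: "\<And>T. T0 \<le> T \<Longrightarrow> A T < y * real T"
  shows False
proof -
  define L where "L T = (real T * (g - y) + h1) / K - 1" for T
  obtain n where n: "(K * (2 * y / b + 1) - h1) / (g - y) \<le> real n"
    using real_arch_simple by blast
  define T where "T = max n (max T0 1)"
  have T: "T0 \<le> T" "1 \<le> T" "(K * (2 * y / b + 1) - h1) / (g - y) \<le> real T"
    using n unfolding T_def by auto
  have X_ge: "L T \<le> X t" if "T \<le> t" for t
  proof -
    have "real t * g + h1 - K * (X t + 1) < y * real t" using A_ge_X[of t] A_less[of t] that T by simp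
    moreover have "real T * (g - y) \<le> real t * (g - y)" using that y by (intro mult_right_mono) auto
    ultimately have "real T * (g - y) + h1 < K * (X t + 1)" by (simp add: algebra_simps)
    then show ?thesis unfolding L_def using K by (simp add: field_simps)
  qed
  have "real T * L T = (\<Sum>t\<in>{T..<2 * T}. L T)" by simp
  also have "\<dots> \<le> (\<Sum>t\<in>{T..<2 * T}. X (t + 1))" by (intro sum_mono X_ge) simp
  also have "\<dots> \<le> (\<Sum>t<2 * T. X (t + 1))" by (intro sum_mono2) (auto simp: X_nonneg)
  finally have "real T * L T \<le> (\<Sum>t<2 * T. X (t + 1))" .
  then have "b * (real T * L T) \<le> b * (\<Sum>t<2 * T. X (t + 1))" using b by simp
  also have "\<dots> < y * real (2 * T)" using A_ge_sum[of "2 * T"] A_less[of "2 * T"] T by simp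
  finally have "b * (real T * L T) < y * real (2 * T)" .
  then have "b * L T < 2 * y" using T by (simp add: algebra_simps)
  moreover have "2 * y \<le> b * L T"
  proof -
    have "K * (2 * y / b + 1) \<le> real T * (g - y) + h1" using T y by (simp add: field_simps)
    then show ?thesis unfolding L_def using K b by (simp add: field_simps)
  qed
  ultimately show False by simp
qed

lemma initial_segment_threshold:
  fixes P :: "nat \<Rightarrow> bool"
  assumes down: "\<And>s s'. 1 \<le> s \<Longrightarrow> s \<le> s' \<Longrightarrow> P s' \<Longrightarrow> P s"
    and n: "1 \<le> n" "\<not> P n"
  obtains \<theta> where "1 \<le> \<theta>" "\<And>s. 1 \<le> s \<Longrightarrow> P s \<longleftrightarrow> s < \<theta>"
proof
  define \<theta> where "\<theta> = (LEAST s. 1 \<le> s \<and> \<not> P s)"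
  have \<theta>: "1 \<le> \<theta> \<and> \<not> P \<theta>"
    unfolding \<theta>_def by (rule LeastI[of _ n]) (use n in simp)
  then show "1 \<le> \<theta>" by simp
  fix s :: nat assume s: "1 \<le> s"
  show "P s \<longleftrightarrow> s < \<theta>"
  proof
    assume "P s"
    then show "s < \<theta>" using \<theta> down[OF \<theta>[THEN conjunct1]] by (metis not_le)
  next
    assume "s < \<theta>"
    then show "P s" using s not_less_Least unfolding \<theta>_def by blast
  qed
qed

lemma struct3I:
  fixes Q :: "action \<Rightarrow> real"
  assumes range: "\<And>s. 1 \<le> s \<Longrightarrow> d s \<in> {actO, x, y, actB}"
    and mono: "\<And>s s'. 1 \<le> s \<Longrightarrow> s \<le> s' \<Longrightarrow> Q (d s) \<le> Q (d s')"
    and Q: "Q actO < Q x" "Q x < Q y" "Q x < Q actB"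
    and absorbing: "\<And>s s'. 1 \<le> s \<Longrightarrow> s \<le> s' \<Longrightarrow> d s = actB \<Longrightarrow> d s' = actB"
    and n: "1 \<le> n" "d n = actB"
  shows "struct3 x y d"
proof -
  have ne: "actB \<noteq> actO" "actB \<noteq> x" "x \<noteq> actO" using Q by auto
  have down1: "d s = actO" if "1 \<le> s" "s \<le> s'" "d s' = actO" for s s'
  proof -
    have "Q (d s) \<le> Q actO" using mono[OF that(1,2)] that(3) by simp
    then show ?thesis using range[OF that(1)] Q by fastforce
  qed
  obtain \<theta>1 where \<theta>1: "1 \<le> \<theta>1" "\<And>s. 1 \<le> s \<Longrightarrow> d s = actO \<longleftrightarrow> s < \<theta>1"
    by (rule initial_segment_threshold[of "\<lambda>s. d s = actO", OF down1 n(1)]) (use n ne in auto)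
  have down2: "d s \<in> {actO, x}" if "1 \<le> s" "s \<le> s'" "d s' \<in> {actO, x}" for s s'
  proof -
    have "Q (d s) \<le> Q x" using mono[OF that(1,2)] that(3) Q by auto
    then show ?thesis using range[OF that(1)] Q by fastforce
  qed
  obtain \<theta>2 where \<theta>2: "1 \<le> \<theta>2" "\<And>s. 1 \<le> s \<Longrightarrow> d s \<in> {actO, x} \<longleftrightarrow> s < \<theta>2"
    by (rule initial_segment_threshold[of "\<lambda>s. d s \<in> {actO, x}", OF down2 n(1)]) (use n ne in auto)
  obtain \<theta>3 where \<theta>3: "1 \<le> \<theta>3" "\<And>s. 1 \<le> s \<Longrightarrow> d s \<noteq> actB \<longleftrightarrow> s < \<theta>3"
    by (rule initial_segment_threshold[of "\<lambda>s. d s \<noteq> actB", OF _ n(1)]) (use absorbing n in auto)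
  have "\<theta>1 \<le> \<theta>2"
  proof (rule ccontr)
    assume "\<not> \<theta>1 \<le> \<theta>2"
    then have "d \<theta>2 = actO" using \<theta>1(2)[OF \<theta>2(1)] by simp
    then show False using \<theta>2(2)[of \<theta>2] \<theta>2(1) \<open>\<not> \<theta>1 \<le> \<theta>2\<close> by simp
  qed
  moreover have "\<theta>2 \<le> \<theta>3"
  proof (rule ccontr)
    assume "\<not> \<theta>2 \<le> \<theta>3"
    then have "d \<theta>3 \<in> {actO, x}" using \<theta>2(2)[OF \<theta>3(1)] by simp
    then show False using \<theta>3(2)[of \<theta>3] \<theta>3(1) \<open>\<not> \<theta>2 \<le> \<theta>3\<close> ne by auto
  qed
  moreover have "d s = (if s < \<theta>1 then actO else if s < \<theta>2 then x else if s < \<theta>3 then y else actB)"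
    if "1 \<le> s" for s
    using range[OF that] \<theta>1(2)[OF that] \<theta>2(2)[OF that] \<theta>3(2)[OF that] by auto
  ultimately show ?thesis unfolding struct3_def using \<theta>1(1) by blast
qed

lemma struct2I:
  fixes Q :: "action \<Rightarrow> real"
  assumes range: "\<And>s. 1 \<le> s \<Longrightarrow> d s \<in> {actO, x, actB}"
    and mono: "\<And>s s'. 1 \<le> s \<Longrightarrow> s \<le> s' \<Longrightarrow> Q (d s) \<le> Q (d s')"
    and Q: "Q actO < Q x" "Q actO < Q actB"
    and absorbing: "\<And>s s'. 1 \<le> s \<Longrightarrow> s \<le> s' \<Longrightarrow> d s = actB \<Longrightarrow> d s' = actB"
    and n: "1 \<le> n" "d n = actB"
  shows "struct2 x d"
proof -
  have ne: "actB \<noteq> actO" "x \<noteq> actO" using Q by auto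
  have down1: "d s = actO" if "1 \<le> s" "s \<le> s'" "d s' = actO" for s s'
  proof -
    have "Q (d s) \<le> Q actO" using mono[OF that(1,2)] that(3) by simp
    then show ?thesis using range[OF that(1)] Q by fastforce
  qed
  obtain \<theta>1 where \<theta>1: "1 \<le> \<theta>1" "\<And>s. 1 \<le> s \<Longrightarrow> d s = actO \<longleftrightarrow> s < \<theta>1"
    by (rule initial_segment_threshold[of "\<lambda>s. d s = actO", OF down1 n(1)]) (use n ne in auto)
  obtain \<theta>2 where \<theta>2: "1 \<le> \<theta>2" "\<And>s. 1 \<le> s \<Longrightarrow> d s \<noteq> actB \<longleftrightarrow> s < \<theta>2"
    by (rule initial_segment_threshold[of "\<lambda>s. d s \<noteq> actB", OF _ n(1)]) (use absorbing n in auto)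
  have "\<theta>1 \<le> \<theta>2"
  proof (rule ccontr)
    assume "\<not> \<theta>1 \<le> \<theta>2"
    then have "d \<theta>2 = actO" using \<theta>1(2)[OF \<theta>2(1)] by simp
    then show False using \<theta>2(2)[of \<theta>2] \<theta>2(1) ne by simp
  qed
  moreover have "d s = (if s < \<theta>1 then actO else if s < \<theta>2 then x else actB)" if "1 \<le> s" for s
    using range[OF that] \<theta>1(2)[OF that] \<theta>2(2)[OF that] by auto
  ultimately show ?thesis unfolding struct2_def using \<theta>1(1) by blast
qed

lemma threshold_typeI:
  assumes "\<And>s. n \<le> s \<Longrightarrow> d s = d n"
  shows "threshold_type d"
  unfolding threshold_type_def
proof (intro exI[of _ n] exI[of _ "\<lambda>k. d (k + 1)"] exI[of _ "\<lambda>k. k + 1"] conjI allI impI)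
  fix k s assume "k < n" "k + 1 \<le> s \<and> s < Suc k + 1"
  then have "s = k + 1" by linarith
  then show "d s = d (k + 1)" by simp
next
  fix s assume "n + 1 \<le> s"
  then show "d s = d (n + 1)" using assms[of s] assms[of "n + 1"] by simp
qed simp_all

locale recruitment_mdp =
  fixes p c r :: "vtype \<Rightarrow> real" and \<beta> \<epsilon> :: real
  assumes p: "\<And>n. 0 < p n \<and> p n \<le> 1"
    and c: "\<And>n. 0 < c n"
    and r: "\<And>n. 0 < r n \<and> r n \<le> 1"
    and rLH: "r Low < r High"
    and beta: "0 < \<beta>" "\<beta> < 1"
    and eps: "0 < \<epsilon>"
begin

abbreviation "Q \<equiv> Qa p r"
abbreviation "E \<equiv> Ea p c"
abbreviation "u \<equiv> ucost p c r \<beta> \<epsilon>"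
abbreviation "QL \<equiv> Q actL"
abbreviation "QH \<equiv> Q actH"
abbreviation "QB \<equiv> Q actB"
abbreviation "EL \<equiv> E actL"
abbreviation "EH \<equiv> E actH"

lemma Q_actO [simp]: "Q actO = 0"
  by (simp add: Qa_def)

lemma E_actO [simp]: "E actO = 0"
  by (simp add: Ea_def)

lemma QB_eq: "QB = 1 - (1 - QL) * (1 - QH)"
  by (simp add: Qa_def)

lemma E_actB: "E actB = EL + EH"
  by (simp add: Ea_def)

lemma QL_pos: "0 < QL" and QL_less_1: "QL < 1"
proof -
  have "r Low * p Low \<le> r Low" using p[of Low] r[of Low] by (simp add: mult_left_le)
  then show "QL < 1" using rLH r[of High] by (simp add: Qa_def)
  show "0 < QL" using p[of Low] r[of Low] by (simp add: Qa_def)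
qed

lemma QH_pos: "0 < QH" and QH_le_1: "QH \<le> 1"
  using p[of High] r[of High] by (auto simp: Qa_def mult_le_one)

lemma EL_pos: "0 < EL" and EH_pos: "0 < EH"
  using p c by (simp_all add: Ea_def)

lemma QL_less_QB: "QL < QB"
  using QL_less_1 QH_pos by (simp add: QB_eq algebra_simps)

lemma QH_le_QB: "QH \<le> QB"
  using QL_pos QH_le_1 by (simp add: QB_eq algebra_simps mult_nonneg_nonneg)

lemma QH_less_QB: "QH < 1 \<Longrightarrow> QH < QB"
  using QL_pos by (simp add: QB_eq algebra_simps)

lemma QB_le_1: "QB \<le> 1"
  using QL_pos QL_less_1 QH_pos QH_le_1 by (simp add: QB_eq)

lemma QB_pos: "0 < QB"
  using QL_pos QL_less_QB by linarith

lemma QB_eq_1_iff: "QB = 1 \<longleftrightarrow> QH = 1"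
  using QL_less_1 by (simp add: QB_eq)

lemma Q_bounds: "0 \<le> Q a \<and> Q a \<le> 1"
  using action_cases[of a] QL_pos QL_less_1 QH_pos QH_le_1 QB_pos QB_le_1 by auto

lemma Q_le_QB: "Q a \<le> QB"
  using action_cases[of a] QL_less_QB QH_le_QB QB_pos by auto

lemma E_nonneg: "0 \<le> E a"
  using action_cases[of a] EL_pos EH_pos by (auto simp: E_actB)

lemma E_le_E_actB: "E a \<le> E actB"
  using action_cases[of a] EL_pos EH_pos by (auto simp: E_actB)

lemma u_eq: "u s a = (1 - \<beta>) * E a + \<beta> * \<epsilon> * (Q a + (1 - Q a) * (real s + 1)^2)"
  unfolding ucost_def by (simp add: algebra_simps power2_eq_square)

lemma u_nonneg: "0 \<le> u s a"
  using Q_bounds[of a] E_nonneg[of a] beta eps unfolding u_eq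
  by (intro add_nonneg_nonneg mult_nonneg_nonneg) auto

lemma u_mono: "s \<le> s' \<Longrightarrow> u s a \<le> u s' a"
  unfolding u_eq using Q_bounds[of a] beta eps
  by (intro add_left_mono mult_left_mono power_mono) auto

definition "rho = gamma p c r actO actL / gamma p c r actO actH"

definition "ratio = (1 - QH) / (1 - QL)"

lemma rho_ge_1_iff: "1 \<le> rho \<longleftrightarrow> QL * EH \<le> QH * EL"
  using QL_pos QH_pos EL_pos EH_pos
  by (simp add: rho_def gamma_def le_divide_eq divide_le_eq field_simps)

lemma ratio_le_rho_iff: "ratio \<le> rho \<longleftrightarrow> (1 - QH) * QL * EH \<le> (1 - QL) * QH * EL"
  using QL_pos QL_less_1 QH_pos EL_pos EH_pos
  by (simp add: rho_def ratio_def gamma_def field_simps)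

lemma rho_pos: "0 < rho"
  using QL_pos QH_pos EL_pos EH_pos by (simp add: rho_def gamma_def)

lemma QH_less_1_of_ratio: "rho < ratio \<Longrightarrow> QH < 1"
  using rho_pos QH_le_1 by (cases "QH = 1") (simp_all add: ratio_def)

lemma QL_less_QH_of_ratio: "ratio < 1 \<Longrightarrow> QL < QH"
  using QL_less_1 by (simp add: ratio_def divide_less_eq)

lemma QH_less_QL_of_ratio: "1 < ratio \<Longrightarrow> QH < QL"
  using QL_less_1 by (simp add: ratio_def less_divide_eq)

subsection \<open>A solution of the optimality equation\<close>

text \<open>If \<open>QH = 1\<close>, then \<open>H\<close> renews as surely as \<open>B\<close> and is cheaper.\<close>

definition "tail_action = (if QH = 1 then actH else actB)"

lemma Q_tail_action: "Q tail_action = QB"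
  using QB_eq_1_iff by (simp add: tail_action_def)

lemma E_tail_action_le: "Q a = QB \<Longrightarrow> E tail_action \<le> E a"
  using action_cases[of a] QB_pos QL_less_QB QH_less_QB QH_le_1 EL_pos
  by (auto simp: tail_action_def E_actB)

text \<open>\<open>renewal_cost s\<close> is the expected cost until the next renewal when the tail action is
  used from age \<open>s\<close> on; the coefficients come from matching powers of \<open>s + 1\<close> in
  \<open>renewal_cost_rec\<close>.\<close>

definition "renewal_coeff2 = \<beta> * \<epsilon> * (1 - QB) / QB"

definition "renewal_coeff1 = 2 * renewal_coeff2 * (1 - QB) / QB"

definition "renewal_coeff0 =
  ((1 - \<beta>) * E tail_action + \<beta> * \<epsilon> * QB + (1 - QB) * (renewal_coeff2 + renewal_coeff1)) / QB"

definition renewal_cost :: "nat \<Rightarrow> real" where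
  "renewal_cost s = renewal_coeff2 * (real s + 1)^2 + renewal_coeff1 * (real s + 1) + renewal_coeff0"

lemma renewal_coeffs_nonneg: "0 \<le> renewal_coeff2" "0 \<le> renewal_coeff1" "0 \<le> renewal_coeff0"
proof -
  show c2: "0 \<le> renewal_coeff2"
    unfolding renewal_coeff2_def using QB_pos QB_le_1 beta eps by simp
  show c1: "0 \<le> renewal_coeff1"
    unfolding renewal_coeff1_def using c2 QB_pos QB_le_1 by simp
  show "0 \<le> renewal_coeff0"
    unfolding renewal_coeff0_def using c1 c2 QB_pos QB_le_1 beta eps E_nonneg[of tail_action]
    by (intro divide_nonneg_pos add_nonneg_nonneg mult_nonneg_nonneg) auto
qed

lemma renewal_cost_rec: "renewal_cost s = u s tail_action + (1 - QB) * renewal_cost (s + 1)"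
proof -
  have "QB * renewal_cost s = QB * (u s tail_action + (1 - QB) * renewal_cost (s + 1))"
    unfolding renewal_cost_def u_eq Q_tail_action renewal_coeff0_def renewal_coeff1_def
      renewal_coeff2_def
    using QB_pos by (simp add: field_simps power2_eq_square)
  then show ?thesis using QB_pos by simp
qed

lemma renewal_cost_nonneg: "0 \<le> renewal_cost s"
  unfolding renewal_cost_def using renewal_coeffs_nonneg by simp

lemma renewal_cost_mono: "s \<le> s' \<Longrightarrow> renewal_cost s \<le> renewal_cost s'"
  unfolding renewal_cost_def using renewal_coeffs_nonneg
  by (intro add_mono mult_left_mono power_mono) auto

lemma renewal_cost_quadratic: "\<exists>K. \<forall>s. renewal_cost s \<le> K * (real s ^ 2 + 1)"
proof -
  define K where "K = renewal_coeff2 + renewal_coeff1 + renewal_coeff0"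
  have "renewal_cost s \<le> 2 * K * (real s ^ 2 + 1)" for s
  proof -
    have x: "1 \<le> real s + 1" "real s + 1 \<le> (real s + 1)^2" by (simp_all add: power2_eq_square)
    have "renewal_cost s \<le> K * (real s + 1)^2"
      unfolding renewal_cost_def K_def using renewal_coeffs_nonneg x
        mult_left_mono[OF x(2), of renewal_coeff1] mult_left_mono[of 1 "(real s + 1)^2" renewal_coeff0]
      by (simp add: algebra_simps)
    also have "\<dots> \<le> K * (2 * (real s ^ 2 + 1))"
    proof (rule mult_left_mono)
      have "0 \<le> (real s - 1)^2" by simp
      then show "(real s + 1)^2 \<le> 2 * (real s ^ 2 + 1)" by (simp add: power2_eq_square algebra_simps)
      show "0 \<le> K" using renewal_coeffs_nonneg unfolding K_def by simp
    qed
    finally show ?thesis by (simp add: algebra_simps)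
  qed
  then show ?thesis by blast
qed

definition "tail_value g s = renewal_cost s - g / QB"

lemma tail_value_rec: "tail_value g s = u s tail_action - g + (1 - QB) * tail_value g (s + 1)"
proof -
  have "g / QB = g + (1 - QB) * (g / QB)" using QB_pos by (simp add: field_simps)
  moreover have "(1 - QB) * tail_value g (s + 1) = (1 - QB) * renewal_cost (s + 1) - (1 - QB) * (g / QB)"
    unfolding tail_value_def by (simp add: right_diff_distrib)
  ultimately show ?thesis unfolding tail_value_def using renewal_cost_rec[of s] by linarith
qed

definition "gain_bound = QB * renewal_cost 1"

definition "Q_gap = Min ((\<lambda>a. QB - Q a) ` {a. Q a < QB})"

lemma Q_gap_pos: "0 < Q_gap" and Q_gap_le: "Q a < QB \<Longrightarrow> Q_gap \<le> QB - Q a"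
proof -
  have fin: "finite ((\<lambda>a. QB - Q a) ` {a. Q a < QB})"
    using finite_subset[OF subset_UNIV finite_UNIV_action] by blast
  have "actO \<in> {a. Q a < QB}" using QB_pos by simp
  then have "Q_gap \<in> (\<lambda>a. QB - Q a) ` {a. Q a < QB}"
    unfolding Q_gap_def by (intro Min_in[OF fin]) blast
  then show "0 < Q_gap" by auto
  show "Q a < QB \<Longrightarrow> Q_gap \<le> QB - Q a" unfolding Q_gap_def by (rule Min_le[OF fin]) simp
qed

text \<open>From this age on, the age penalty of a less reliable action outweighs any saving in
  recruitment cost, so the tail action is optimal.\<close>

definition "horizon = nat \<lceil>(gain_bound / QB + (1 - \<beta>) * E actB / Q_gap) / (\<beta> * \<epsilon>)\<rceil> + 1"

lemma horizon_pos: "1 \<le> horizon"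
  by (simp add: horizon_def)

lemma horizon_large:
  assumes "horizon \<le> s"
  shows "gain_bound / QB + (1 - \<beta>) * E actB / Q_gap \<le> \<beta> * \<epsilon> * ((real s + 1)^2 - 1)"
proof -
  have be: "0 < \<beta> * \<epsilon>" using beta eps by simp
  have "(gain_bound / QB + (1 - \<beta>) * E actB / Q_gap) / (\<beta> * \<epsilon>) \<le> real s"
    using assms unfolding horizon_def by linarith
  then have "gain_bound / QB + (1 - \<beta>) * E actB / Q_gap \<le> \<beta> * \<epsilon> * real s"
    using be by (simp add: field_simps)
  also have "\<dots> \<le> \<beta> * \<epsilon> * ((real s + 1)^2 - 1)"
    using be by (intro mult_left_mono) (auto simp: power2_eq_square algebra_simps)
  finally show ?thesis .
qed

lemma tail_action_optimal:
  assumes g: "0 \<le> g" "g \<le> gain_bound" and s: "horizon \<le> s"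
  shows "tail_value g s \<le> u s a - g + (1 - Q a) * tail_value g (s + 1)"
proof -
  define Y where "Y = tail_value g (s + 1)"
  have "g / QB \<le> gain_bound / QB" using g QB_pos by (simp add: divide_right_mono)
  then have Y: "- (gain_bound / QB) \<le> Y"
    unfolding Y_def tail_value_def using renewal_cost_nonneg[of "s + 1"] by linarith
  have "(1 - \<beta>) * (E tail_action - E a) \<le> (QB - Q a) * (\<beta> * \<epsilon> * ((real s + 1)^2 - 1) + Y)"
  proof (cases "Q a = QB")
    case True
    then show ?thesis using E_tail_action_le[OF True] beta by (simp add: mult_nonneg_nonpos)
  next
    case False
    then have gap: "Q_gap \<le> QB - Q a" using Q_gap_le Q_le_QB[of a] by simp
    have "(1 - \<beta>) * E actB / Q_gap \<le> \<beta> * \<epsilon> * ((real s + 1)^2 - 1) + Y"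
      using horizon_large[OF s] Y by linarith
    then have "Q_gap * ((1 - \<beta>) * E actB / Q_gap)
        \<le> (QB - Q a) * (\<beta> * \<epsilon> * ((real s + 1)^2 - 1) + Y)"
      using gap Q_gap_pos beta E_nonneg[of actB] by (intro mult_mono) auto
    moreover have "Q_gap * ((1 - \<beta>) * E actB / Q_gap) = (1 - \<beta>) * E actB"
      using Q_gap_pos by simp
    moreover have "(1 - \<beta>) * (E tail_action - E a) \<le> (1 - \<beta>) * E actB"
      using E_le_E_actB[of tail_action] E_nonneg[of a] beta by (intro mult_left_mono) auto
    ultimately show ?thesis by linarith
  qed
  moreover have "u s a + (1 - Q a) * Y - (u s tail_action + (1 - QB) * Y)
      = (QB - Q a) * (\<beta> * \<epsilon> * ((real s + 1)^2 - 1) + Y) - (1 - \<beta>) * (E tail_action - E a)"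
    unfolding u_eq Q_tail_action by (simp add: algebra_simps)
  ultimately show ?thesis using tail_value_rec[of g s] unfolding Y_def by linarith
qed

fun value_iter :: "real \<Rightarrow> nat \<Rightarrow> nat \<Rightarrow> real" where
  "value_iter g 0 s = tail_value g s"
| "value_iter g (Suc k) s = Min (range (\<lambda>a. u s a - g + (1 - Q a) * value_iter g k (s + 1)))"

definition "rel_value g s = value_iter g (horizon - s) s"

lemma rel_value_tail: "horizon \<le> s \<Longrightarrow> rel_value g s = tail_value g s"
  by (simp add: rel_value_def)

lemma rel_value_step:
  "s < horizon \<Longrightarrow> rel_value g s = Min (range (\<lambda>a. u s a - g + (1 - Q a) * rel_value g (s + 1)))"
proof -
  assume "s < horizon"
  then have "horizon - s = Suc (horizon - (s + 1))" by simp
  then show ?thesis by (simp add: rel_value_def)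
qed

lemma rel_value_bellman:
  assumes "0 \<le> g" "g \<le> gain_bound"
  shows "rel_value g s = Min (range (\<lambda>a. u s a - g + (1 - Q a) * rel_value g (s + 1)))"
proof (cases "s < horizon")
  case True
  then show ?thesis by (rule rel_value_step)
next
  case False
  then have "rel_value g s = u s tail_action - g + (1 - Q tail_action) * rel_value g (s + 1)"
    using tail_value_rec[of g s] by (simp add: rel_value_tail Q_tail_action)
  moreover have "rel_value g s \<le> u s a - g + (1 - Q a) * rel_value g (s + 1)" for a
    using False tail_action_optimal[OF assms] by (simp add: rel_value_tail)
  ultimately show ?thesis
    by (metis (mono_tags, lifting) Min_range_action_attained Min_range_action_le order_antisym)
qed

lemma rel_value_le_tail_value: "rel_value g s \<le> tail_value g s"
proof (induction "horizon - s" arbitrary: s)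
  case 0
  then show ?case by (simp add: rel_value_tail)
next
  case (Suc k)
  then have "s < horizon" "rel_value g (s + 1) \<le> tail_value g (s + 1)" by simp_all
  have "rel_value g s \<le> u s tail_action - g + (1 - Q tail_action) * rel_value g (s + 1)"
    unfolding rel_value_step[OF \<open>s < horizon\<close>] by (rule Min_range_action_le)
  also have "\<dots> \<le> u s tail_action - g + (1 - QB) * tail_value g (s + 1)"
    using \<open>rel_value g (s + 1) \<le> _\<close> QB_le_1 by (simp add: Q_tail_action mult_left_mono)
  also have "\<dots> = tail_value g s" by (rule tail_value_rec[symmetric])
  finally show ?case .
qed

lemma rel_value_Suc_mono:
  assumes g: "0 \<le> g" "g \<le> gain_bound"
  shows "rel_value g s \<le> rel_value g (s + 1)"
proof (induction "horizon - s" arbitrary: s)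
  case 0
  then have "rel_value g s = tail_value g s" "rel_value g (s + 1) = tail_value g (s + 1)"
    by (simp_all add: rel_value_tail)
  then show ?case using renewal_cost_mono[of s "s + 1"] by (simp add: tail_value_def)
next
  case (Suc k)
  then have IH: "rel_value g (s + 1) \<le> rel_value g (s + 2)" by simp
  define F where "F = (\<lambda>a. u (s + 1) a - g + (1 - Q a) * rel_value g (s + 2))"
  obtain a where a: "Min (range F) = F a" using Min_range_action_attained by blast
  have "rel_value g s \<le> u s a - g + (1 - Q a) * rel_value g (s + 1)"
    unfolding rel_value_bellman[OF g, of s] by (rule Min_range_action_le)
  also have "\<dots> \<le> F a"
    unfolding F_def using u_mono[of s "s + 1" a] IH Q_bounds[of a]
    by (intro add_mono diff_right_mono mult_left_mono) auto
  also have "\<dots> = rel_value g (s + 1)"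
    using rel_value_bellman[OF g, of "s + 1"] a unfolding F_def by (simp add: numeral_2_eq_2)
  finally show ?case .
qed

lemma rel_value_mono:
  assumes "0 \<le> g" "g \<le> gain_bound" "s \<le> s'"
  shows "rel_value g s \<le> rel_value g s'"
  using lift_Suc_mono_le[of "rel_value g", OF _ assms(3)] rel_value_Suc_mono[OF assms(1,2)] by simp

lemma isCont_value_iter: "isCont (\<lambda>g. value_iter g k s) g0"
proof (induction k arbitrary: s)
  case 0
  then show ?case unfolding value_iter.simps tail_value_def using QB_pos by (auto intro!: continuous_intros)
next
  case (Suc k)
  then show ?case unfolding value_iter.simps Min_range_action by (intro continuous_intros Suc)
qed

lemma value_iter_gain0_nonneg: "0 \<le> value_iter 0 k s"
proof (induction k arbitrary: s)
  case 0
  then show ?case by (simp add: tail_value_def renewal_cost_nonneg)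
next
  case (Suc k)
  define F where "F = (\<lambda>a. u s a - 0 + (1 - Q a) * value_iter 0 k (s + 1))"
  obtain a where "Min (range F) = F a" using Min_range_action_attained by blast
  moreover have "0 \<le> F a"
    unfolding F_def using u_nonneg Q_bounds Suc.IH by (simp add: add_nonneg_nonneg mult_nonneg_nonneg)
  ultimately show ?case unfolding value_iter.simps F_def by simp
qed

lemma exists_gain: "\<exists>g. 0 \<le> g \<and> g \<le> gain_bound \<and> rel_value g 1 = 0"
proof -
  have "rel_value gain_bound 1 \<le> 0"
    using rel_value_le_tail_value[of gain_bound 1] QB_pos by (simp add: tail_value_def gain_bound_def)
  moreover have "0 \<le> rel_value 0 1"
    unfolding rel_value_def by (rule value_iter_gain0_nonneg)
  moreover have "0 \<le> gain_bound"
    using QB_pos renewal_cost_nonneg by (simp add: gain_bound_def)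
  ultimately show ?thesis
    unfolding rel_value_def using isCont_value_iter
    by (intro IVT2[of "\<lambda>g. value_iter g (horizon - 1) 1" gain_bound 0 0]) auto
qed

subsection \<open>Verification of average-cost optimality\<close>

lemma stage_cost_ge_acoe:
  assumes acoe: "\<And>s a. h s \<le> u s a - g + Q a * h 1 + (1 - Q a) * h (s + 1)"
  shows "g + expected_state p r \<psi> t h - expected_state p r \<psi> (Suc t) h \<le> stage_cost p c r \<beta> \<epsilon> \<psi> t"
proof -
  have "g + expected_state p r \<psi> t h - expected_state p r \<psi> (Suc t) h
      = expected_sa p r \<psi> t (\<lambda>s a. g + h s - (Q a * h 1 + (1 - Q a) * h (s + 1)))"
    by (simp add: expected_state_Suc[OF Q_bounds] expected_sa_diff expected_sa_add expected_sa_const)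
  also have "\<dots> \<le> expected_sa p r \<psi> t u"
    using acoe by (intro expected_sa_mono) (simp add: algebra_simps)
  finally show ?thesis by (simp add: stage_cost_eq_expected_sa)
qed

lemma sum_stage_cost_ge_acoe:
  assumes "\<And>s a. h s \<le> u s a - g + Q a * h 1 + (1 - Q a) * h (s + 1)"
  shows "real T * g + h 1 - expected_state p r \<psi> T h \<le> (\<Sum>t<T. stage_cost p c r \<beta> \<epsilon> \<psi> t)"
proof (induction T)
  case (Suc T)
  then show ?case using stage_cost_ge_acoe[OF assms, of \<psi> T] by (simp add: algebra_simps)
qed (simp add: expected_state_0)

lemma stage_cost_ge_age_sq:
  "\<beta> * \<epsilon> * expected_state p r \<psi> (Suc t) (\<lambda>s. real s ^ 2) \<le> stage_cost p c r \<beta> \<epsilon> \<psi> t"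
proof -
  have "\<beta> * \<epsilon> * expected_state p r \<psi> (Suc t) (\<lambda>s. real s ^ 2)
      = expected_sa p r \<psi> t (\<lambda>s a. \<beta> * \<epsilon> * (Q a + (1 - Q a) * (real s + 1) ^ 2))"
    by (simp add: expected_state_Suc[OF Q_bounds] expected_sa_cmult[symmetric] add.commute)
  also have "\<dots> \<le> expected_sa p r \<psi> t u"
    using beta E_nonneg by (intro expected_sa_mono) (simp add: u_eq)
  finally show ?thesis by (simp add: stage_cost_eq_expected_sa)
qed

lemma avg_cost_ge_of_acoe:
  assumes acoe: "\<And>s a. h s \<le> u s a - g + Q a * h 1 + (1 - Q a) * h (s + 1)"
    and growth: "\<And>s. h s \<le> K * (real s ^ 2 + 1)"
  shows "ereal g \<le> avg_cost p c r \<beta> \<epsilon> \<psi>"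
proof (rule ccontr)
  define A where "A T = (\<Sum>t<T. stage_cost p c r \<beta> \<epsilon> \<psi> t)" for T
  define X where "X t = expected_state p r \<psi> t (\<lambda>s. real s ^ 2)" for t
  define K' where "K' = max K 1"
  assume "\<not> ereal g \<le> avg_cost p c r \<beta> \<epsilon> \<psi>"
  then have "limsup (\<lambda>T. ereal (A T / real T)) < ereal g"
    by (simp add: avg_cost_def A_def)
  then obtain y where y: "limsup (\<lambda>T. ereal (A T / real T)) < ereal y" "y < g"
    using ereal_dense2 by (metis ereal_less(2) ereal_less_eq(1) less_ereal.simps(1) not_le)
  then obtain T0 where T0: "\<And>T. T0 \<le> T \<Longrightarrow> A T / real T < y"
    using Limsup_lessD[OF y(1)] by (auto simp: eventually_sequentially)
  show False
  proof (rule superlinear_sum_not_eventually_linear)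
    show "0 < K'" "0 < \<beta> * \<epsilon>" "y < g" using beta eps y(2) by (simp_all add: K'_def)
    show "real T * g + h 1 - K' * (X T + 1) \<le> A T" for T
    proof -
      have "h s \<le> K' * (real s ^ 2 + 1)" for s
        using growth[of s] mult_right_mono[of K K' "real s ^ 2 + 1"] by (simp add: K'_def)
      then have "expected_state p r \<psi> T h \<le> expected_state p r \<psi> T (\<lambda>s. K' * (real s ^ 2 + 1))"
        by (intro expected_sa_mono)
      also have "\<dots> = K' * (X T + 1)"
        by (simp add: X_def expected_sa_add expected_sa_cmult expected_sa_const algebra_simps)
      finally show ?thesis using sum_stage_cost_ge_acoe[OF acoe, of T \<psi>] unfolding A_def by linarith
    qed
    show "\<beta> * \<epsilon> * (\<Sum>t<T. X (t + 1)) \<le> A T" for T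
      unfolding A_def X_def sum_distrib_left using stage_cost_ge_age_sq by (simp add: sum_mono)
    show "0 \<le> X t" for t
      using expected_sa_mono[of "\<lambda>s a. 0" "\<lambda>s a. real s ^ 2"] by (simp add: X_def expected_sa_const)
    show "A T < y * real T" if "max T0 1 \<le> T" for T
      using T0[of T] that by (simp add: field_simps)
  qed
qed

lemma sum_stage_cost_stationary:
  assumes Z: "1 \<in> Z" "\<And>s. s \<in> Z \<Longrightarrow> Q (d s) < 1 \<Longrightarrow> s + 1 \<in> Z"
    and acoe: "\<And>s. s \<in> Z \<Longrightarrow> h s = u s (d s) - g + Q (d s) * h 1 + (1 - Q (d s)) * h (s + 1)"
  shows "(\<Sum>t<T. stage_cost p c r \<beta> \<epsilon> (stationary d) t)
    = real T * g + h 1 - expected_state p r (stationary d) T h"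
proof (induction T)
  case (Suc T)
  have "stage_cost p c r \<beta> \<epsilon> (stationary d) T = expected_state p r (stationary d) T (\<lambda>s. u s (d s))"
    unfolding stage_cost_eq_expected_sa by (rule expected_sa_stationary)
  also have "\<dots> = expected_state p r (stationary d) T
      (\<lambda>s. g + h s - (Q (d s) * h 1 + (1 - Q (d s)) * h (s + 1)))"
  proof (rule expected_state_stationary_cong[OF Q_bounds Z])
    show "u s (d s) = g + h s - (Q (d s) * h 1 + (1 - Q (d s)) * h (s + 1))" if "s \<in> Z" for s
      using acoe[OF that] by linarith
  qed
  also have "\<dots> = g + expected_state p r (stationary d) T h
      - expected_state p r (stationary d) T (\<lambda>s. Q (d s) * h 1 + (1 - Q (d s)) * h (s + 1))"
    by (simp add: expected_sa_diff expected_sa_add expected_sa_const)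
  also have "expected_state p r (stationary d) T (\<lambda>s. Q (d s) * h 1 + (1 - Q (d s)) * h (s + 1))
      = expected_state p r (stationary d) (Suc T) h"
    unfolding expected_state_Suc[OF Q_bounds] by (rule expected_sa_stationary[symmetric])
  finally show ?case using Suc.IH by (simp add: algebra_simps)
qed (simp add: expected_state_0)

lemma avg_cost_stationary_le:
  assumes Z: "1 \<in> Z" "\<And>s. s \<in> Z \<Longrightarrow> Q (d s) < 1 \<Longrightarrow> s + 1 \<in> Z"
    and acoe: "\<And>s. s \<in> Z \<Longrightarrow> h s = u s (d s) - g + Q (d s) * h 1 + (1 - Q (d s)) * h (s + 1)"
    and bounded: "\<And>s. m \<le> h s"
  shows "avg_cost p c r \<beta> \<epsilon> (stationary d) \<le> ereal g"
proof -
  define A where "A T = (\<Sum>t<T. stage_cost p c r \<beta> \<epsilon> (stationary d) t)" for T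
  have "A T \<le> real T * g + (h 1 - m)" for T
    using sum_stage_cost_stationary[OF Z acoe, of T]
      expected_sa_mono[of "\<lambda>s a. m" "\<lambda>s a. h s" p r "stationary d" T] bounded
    by (simp add: A_def expected_sa_const)
  then have "\<forall>\<^sub>F T in sequentially. ereal (A T / real T) \<le> ereal (g + (h 1 - m) / real T)"
    unfolding eventually_sequentially
    by (intro exI[of _ 1]) (auto simp: field_simps)
  then have "limsup (\<lambda>T. ereal (A T / real T)) \<le> limsup (\<lambda>T. ereal (g + (h 1 - m) / real T))"
    by (rule Limsup_mono)
  also have "\<dots> = ereal g"
    by (intro lim_imp_Limsup) (auto intro!: tendsto_eq_intros lim_const_over_n)
  finally show ?thesis by (simp add: avg_cost_def A_def)
qed

end

section \<open>The optimal threshold policy\<close>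

locale recruitment_acoe = recruitment_mdp +
  fixes g :: real
  assumes gain_nonneg: "0 \<le> g" and gain_le: "g \<le> gain_bound" and rel_value_1: "rel_value g 1 = 0"
begin

abbreviation "h \<equiv> rel_value g"

lemma rel_value_Suc_0 [simp]: "h (Suc 0) = 0"
  using rel_value_1 by simp

lemma rel_value_acoe_le: "h s \<le> u s a - g + Q a * h 1 + (1 - Q a) * h (s + 1)"
proof -
  have "h s \<le> u s a - g + (1 - Q a) * h (s + 1)"
    by (subst rel_value_bellman[OF gain_nonneg gain_le, of s]) (rule Min_range_action_le)
  then show ?thesis by simp
qed

definition "renewal_benefit s = \<beta> * \<epsilon> * ((real s + 1)^2 - 1) + h (s + 1)"

definition "reduced_cost w a = (1 - \<beta>) * E a - Q a * w"

text \<open>Ties are broken so that \<open>L\<close> (if \<open>1 \<le> rho\<close>) or \<open>H\<close> (otherwise) is selected only as a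
  strict minimiser.\<close>

definition "priority = (if 1 \<le> rho then [actO, actH, actB, actL] else [actO, actL, actB, actH])"

definition "select w = first_min (reduced_cost w) priority"

definition "greedy s = (if s < horizon then select (renewal_benefit s) else tail_action)"

lemma bellman_term_eq:
  "u s a - g + (1 - Q a) * h (s + 1)
    = \<beta> * \<epsilon> * (real s + 1)^2 - g + h (s + 1) + reduced_cost (renewal_benefit s) a"
  by (simp add: u_eq reduced_cost_def renewal_benefit_def algebra_simps)

lemma select_min: "reduced_cost w (select w) \<le> reduced_cost w a"
proof -
  have "a \<in> set priority" using action_cases[of a] by (auto simp: priority_def)
  then show ?thesis unfolding select_def by (rule first_min_le)
qed

lemma greedy_acoe: "h s = u s (greedy s) - g + Q (greedy s) * h 1 + (1 - Q (greedy s)) * h (s + 1)"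
proof (cases "s < horizon")
  case True
  define F where "F = (\<lambda>a. u s a - g + (1 - Q a) * h (s + 1))"
  have "F (greedy s) \<le> F a" for a
    using True select_min unfolding F_def bellman_term_eq greedy_def by simp
  moreover obtain a where "Min (range F) = F a" using Min_range_action_attained by blast
  moreover have "Min (range F) \<le> F (greedy s)" by (rule Min_range_action_le)
  ultimately have "Min (range F) = F (greedy s)" by (metis order_antisym)
  then show ?thesis using rel_value_step[OF True] by (simp add: F_def)
next
  case False
  then show ?thesis
    using tail_value_rec[of g s] by (simp add: greedy_def rel_value_tail Q_tail_action)
qed

lemma renewal_benefit_mono: "s \<le> s' \<Longrightarrow> renewal_benefit s \<le> renewal_benefit s'"
  unfolding renewal_benefit_def using rel_value_mono[OF gain_nonneg gain_le, of "s + 1" "s' + 1"] beta eps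
  by (intro add_mono mult_left_mono diff_right_mono power_mono) auto

lemma select_Q_mono: "w \<le> w' \<Longrightarrow> Q (select w) \<le> Q (select w')"
  using select_min[of w "select w'"] select_min[of w' "select w"]
  by (cases "w = w'") (auto simp: reduced_cost_def intro: slope_mono_of_minimizers)

lemma greedy_Q_mono: "s \<le> s' \<Longrightarrow> Q (greedy s) \<le> Q (greedy s')"
  using renewal_benefit_mono select_Q_mono Q_le_QB by (auto simp: greedy_def Q_tail_action)

lemma select_ne_actL:
  assumes "max 1 ratio \<le> rho"
  shows "select w \<noteq> actL"
proof
  assume sel: "select w = actL"
  have "first_min (reduced_cost w) ([actO, actH, actB] @ [actL]) = actL"
    using sel assms by (simp add: select_def priority_def)
  from first_min_last_less[OF this]
  have less: "reduced_cost w actL < reduced_cost w actO" "reduced_cost w actL < reduced_cost w actH"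
    "reduced_cost w actL < reduced_cost w actB"
    by simp_all
  have "QL * EH \<le> QH * EL" "(1 - QH) * QL * EH \<le> (1 - QL) * QH * EL"
    using assms rho_ge_1_iff ratio_le_rho_iff by auto
  from not_strict_min_above_lower_hull[where k = "1 - \<beta>" and w = w,
      OF _ QL_pos less_imp_le[OF QL_less_1] QH_pos QH_le_1 EH_pos this]
  have "\<not> (reduced_cost w actL < reduced_cost w actO \<and> reduced_cost w actL < reduced_cost w actH
      \<and> reduced_cost w actL < (1 - \<beta>) * (EL + EH) - (1 - (1 - QL) * (1 - QH)) * w)"
    using beta by (simp add: reduced_cost_def)
  moreover have "reduced_cost w actB = (1 - \<beta>) * (EL + EH) - (1 - (1 - QL) * (1 - QH)) * w"
    by (simp add: reduced_cost_def E_actB QB_eq)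
  ultimately show False using less by simp
qed

lemma select_ne_actH:
  assumes "rho < min 1 ratio"
  shows "select w \<noteq> actH"
proof
  assume sel: "select w = actH"
  have "first_min (reduced_cost w) ([actO, actL, actB] @ [actH]) = actH"
    using sel assms by (simp add: select_def priority_def)
  from first_min_last_less[OF this]
  have less: "reduced_cost w actH < reduced_cost w actO" "reduced_cost w actH < reduced_cost w actL"
    "reduced_cost w actH < reduced_cost w actB"
    by simp_all
  have "QH * EL \<le> QL * EH" "(1 - QL) * QH * EL \<le> (1 - QH) * QL * EH"
    using assms rho_ge_1_iff ratio_le_rho_iff by auto
  from not_strict_min_above_lower_hull[where k = "1 - \<beta>" and w = w,
      OF _ QH_pos QH_le_1 QL_pos less_imp_le[OF QL_less_1] EL_pos this]
  have "\<not> (reduced_cost w actH < reduced_cost w actO \<and> reduced_cost w actH < reduced_cost w actL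
      \<and> reduced_cost w actH < (1 - \<beta>) * (EH + EL) - (1 - (1 - QH) * (1 - QL)) * w)"
    using beta by (simp add: reduced_cost_def)
  moreover have "reduced_cost w actB = (1 - \<beta>) * (EH + EL) - (1 - (1 - QH) * (1 - QL)) * w"
    by (simp add: reduced_cost_def E_actB QB_eq algebra_simps)
  ultimately show False using less by simp
qed

lemma greedy_ne_actL: "max 1 ratio \<le> rho \<Longrightarrow> greedy s \<noteq> actL"
  using select_ne_actL by (simp add: greedy_def tail_action_def)

lemma greedy_ne_actH: "rho < min 1 ratio \<Longrightarrow> greedy s \<noteq> actH"
  using select_ne_actH QH_less_1_of_ratio by (simp add: greedy_def tail_action_def)

text \<open>Beyond the first age at which the greedy action renews with probability one, no age is
  reachable; switching these ages to \<open>B\<close> leaves the cost unchanged and makes the policy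
  eventually \<open>B\<close>.\<close>

definition "policy s = (if \<exists>s'. 1 \<le> s' \<and> s' < s \<and> Q (greedy s') = 1 then actB else greedy s)"

definition "reachable = {s. 1 \<le> s \<and> (\<forall>s'. 1 \<le> s' \<and> s' < s \<longrightarrow> Q (greedy s') < 1)}"

lemma policy_cases: "policy s = actB \<or> policy s = greedy s"
  by (simp add: policy_def)

lemma policy_reachable: "s \<in> reachable \<Longrightarrow> policy s = greedy s"
  by (auto simp: policy_def reachable_def)

lemma one_reachable: "1 \<in> reachable"
  by (simp add: reachable_def)

lemma reachable_Suc: "s \<in> reachable \<Longrightarrow> Q (policy s) < 1 \<Longrightarrow> s + 1 \<in> reachable"
  by (auto simp: reachable_def policy_reachable less_Suc_eq)

lemma policy_Q_mono:
  assumes "1 \<le> s" "s \<le> s'"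
  shows "Q (policy s) \<le> Q (policy s')"
proof (cases "\<exists>s''. 1 \<le> s'' \<and> s'' < s' \<and> Q (greedy s'') = 1")
  case True
  then show ?thesis using Q_le_QB by (simp add: policy_def)
next
  case False
  then have "policy s = greedy s" "policy s' = greedy s'" using assms by (auto simp: policy_def)
  then show ?thesis using greedy_Q_mono[OF assms(2)] by simp
qed

lemma policy_absorbing:
  assumes s: "1 \<le> s" "s \<le> s'" and B: "policy s = actB"
  shows "policy s' = actB"
proof (cases "\<exists>s''. 1 \<le> s'' \<and> s'' < s' \<and> Q (greedy s'') = 1")
  case True
  then show ?thesis by (simp add: policy_def)
next
  case False
  then have no_trigger: "\<not> (\<exists>s''. 1 \<le> s'' \<and> s'' < s \<and> Q (greedy s'') = 1)" using s(2) by auto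
  have "greedy s = actB" using B unfolding policy_def by (simp only: no_trigger if_False)
  have "greedy s' = actB"
  proof (cases "QB = 1")
    case True
    then have "\<not> s < s'" using False s(1) \<open>greedy s = actB\<close> by auto
    then show ?thesis using s(2) \<open>greedy s = actB\<close> by simp
  next
    case False
    then have "QH < 1" using QB_eq_1_iff QH_le_1 by auto
    have less: "Q a < QB" if "a \<noteq> actB" for a
      using action_cases[of a] that QL_less_QB QH_less_QB[OF \<open>QH < 1\<close>] QB_pos
      by (elim disjE) simp_all
    have "QB \<le> Q (greedy s')" using greedy_Q_mono[OF s(2)] \<open>greedy s = actB\<close> by simp
    then show "greedy s' = actB" using less[of "greedy s'"] by linarith
  qed
  then show ?thesis using policy_cases[of s'] by simp
qed

lemma policy_eventually_actB: "horizon + 1 \<le> s \<Longrightarrow> policy s = actB"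
proof -
  have "policy (horizon + 1) = actB"
  proof (cases "QH = 1")
    case True
    then have "Q (greedy horizon) = 1" using QB_eq_1_iff by (simp add: greedy_def Q_tail_action)
    then have "\<exists>s'. 1 \<le> s' \<and> s' < horizon + 1 \<and> Q (greedy s') = 1"
      using horizon_pos by (intro exI[of _ horizon]) simp
    then show ?thesis by (simp add: policy_def)
  next
    case False
    then have "greedy (horizon + 1) = actB" by (simp add: greedy_def tail_action_def)
    then show ?thesis using policy_cases[of "horizon + 1"] by simp
  qed
  then show "horizon + 1 \<le> s \<Longrightarrow> policy s = actB"
    using policy_absorbing[of "horizon + 1" s] by simp
qed

lemma policy_optimal: "optimal_ds p c r \<beta> \<epsilon> policy"
  unfolding optimal_ds_def
proof
  fix \<psi>
  have "avg_cost p c r \<beta> \<epsilon> (stationary policy) \<le> ereal g"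
  proof (rule avg_cost_stationary_le[OF one_reachable reachable_Suc])
    show "h s = u s (policy s) - g + Q (policy s) * h 1 + (1 - Q (policy s)) * h (s + 1)"
      if "s \<in> reachable" for s
      using greedy_acoe[of s] policy_reachable[OF that] by simp
    show "h 0 \<le> h s" for s by (rule rel_value_mono[OF gain_nonneg gain_le]) simp
  qed
  also have "ereal g \<le> avg_cost p c r \<beta> \<epsilon> \<psi>"
  proof -
    obtain K where K: "\<And>s. renewal_cost s \<le> K * (real s ^ 2 + 1)"
      using renewal_cost_quadratic by blast
    have "h s \<le> K * (real s ^ 2 + 1)" for s
    proof -
      have "0 \<le> g / QB" using gain_nonneg QB_pos by simp
      then show ?thesis using rel_value_le_tail_value[of g s] K[of s] by (simp add: tail_value_def)
    qed
    then show ?thesis by (rule avg_cost_ge_of_acoe[OF rel_value_acoe_le])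
  qed
  finally show "avg_cost p c r \<beta> \<epsilon> (stationary policy) \<le> avg_cost p c r \<beta> \<epsilon> \<psi>" .
qed

lemma policy_threshold_type: "threshold_type policy"
  by (rule threshold_typeI[of "horizon + 1"]) (simp add: policy_eventually_actB)

lemma policy_LH:
  assumes "ratio < rho" "rho < 1"
  shows "struct3 actL actH policy"
proof (rule struct3I[where Q = Q and n = "horizon + 1"])
  show "policy s \<in> {actO, actL, actH, actB}" for s using action_cases[of "policy s"] by simp
  show "Q actO < QL" "QL < QH" "QL < QB"
    using QL_pos QL_less_QH_of_ratio assms QL_less_QB by simp_all
qed (simp_all add: policy_Q_mono policy_absorbing policy_eventually_actB)

lemma policy_HL:
  assumes "1 < rho" "rho < ratio"
  shows "struct3 actH actL policy"
proof (rule struct3I[where Q = Q and n = "horizon + 1"])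
  show "policy s \<in> {actO, actH, actL, actB}" for s using action_cases[of "policy s"] by auto
  show "Q actO < QH" "QH < QL" "QH < QB"
    using QH_pos QH_less_QL_of_ratio QH_less_QB QH_less_1_of_ratio assms by simp_all
qed (simp_all add: policy_Q_mono policy_absorbing policy_eventually_actB)

lemma policy_none_L:
  assumes "max 1 ratio \<le> rho"
  shows "struct2 actH policy"
proof (rule struct2I[where Q = Q and n = "horizon + 1"])
  show "policy s \<in> {actO, actH, actB}" for s
    using action_cases[of "policy s"] policy_cases[of s] greedy_ne_actL[OF assms, of s] by auto
  show "Q actO < QH" "Q actO < QB" using QH_pos QB_pos by simp_all
qed (simp_all add: policy_Q_mono policy_absorbing policy_eventually_actB)

lemma policy_none_H:
  assumes "rho < min 1 ratio"
  shows "struct2 actL policy"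
proof (rule struct2I[where Q = Q and n = "horizon + 1"])
  show "policy s \<in> {actO, actL, actB}" for s
    using action_cases[of "policy s"] policy_cases[of s] greedy_ne_actH[OF assms, of s] by auto
  show "Q actO < QL" "Q actO < QB" using QL_pos QB_pos by simp_all
qed (simp_all add: policy_Q_mono policy_absorbing policy_eventually_actB)

end

theorem corollary1:
  fixes p c r :: "vtype \<Rightarrow> real" and \<beta> \<epsilon> :: real
  assumes p: "\<And>n. 0 < p n \<and> p n \<le> 1"
    and c: "\<And>n. 0 < c n"
    and r: "\<And>n. 0 < r n \<and> r n \<le> 1"
    and rLH: "r Low < r High"
    and beta: "0 < \<beta>" "\<beta> < 1"
    and eps: "0 < \<epsilon>"
  defines "QL \<equiv> Qa p r actL" and "QH \<equiv> Qa p r actH"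
    and "\<rho> \<equiv> gamma p c r actO actL / gamma p c r actO actH"
  shows "\<exists>d. optimal_ds p c r \<beta> \<epsilon> d \<and> threshold_type d \<and>
     ((1 - QH) / (1 - QL) < \<rho> \<and> \<rho> < 1 \<longrightarrow> struct3 actL actH d) \<and>
     (1 < \<rho> \<and> \<rho> < (1 - QH) / (1 - QL) \<longrightarrow> struct3 actH actL d) \<and>
     (\<rho> \<ge> max 1 ((1 - QH) / (1 - QL)) \<longrightarrow> struct2 actH d) \<and>
     (\<rho> < min 1 ((1 - QH) / (1 - QL)) \<longrightarrow> struct2 actL d)"
proof -
  interpret M: recruitment_mdp p c r \<beta> \<epsilon>
    using p c r rLH beta eps by unfold_locales auto
  obtain g where "0 \<le> g" "g \<le> M.gain_bound" "M.rel_value g 1 = 0"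
    using M.exists_gain by blast
  then interpret A: recruitment_acoe p c r \<beta> \<epsilon> g
    by unfold_locales
  have "\<rho> = M.rho" "(1 - QH) / (1 - QL) = M.ratio"
    unfolding \<rho>_def QL_def QH_def M.rho_def M.ratio_def by simp_all
  then show ?thesis
    using A.policy_optimal A.policy_threshold_type A.policy_LH A.policy_HL A.policy_none_L
      A.policy_none_H
    by (intro exI[of _ A.policy]) simp
qed

end
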